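(* Let $d\ge 2$, $\mathcal{X}\in\mathbb{C}^{n_1\times\cdots\times n_d}$ and $0<\epsilon<1$. Suppose that for each $1\le j\le d-1$ there are matrices $U_j\in\mathbb{C}^{(\prod_{i=1}^j n_i)\times r_j}$ with orthonormal columns and $V_j\in\mathbb{C}^{(\prod_{i=j+1}^d n_i)\times r_j}$ such that $\|X_j-U_jV_j^*\|_F\le \frac{\epsilon}{\sqrt{d-1}}\|\mathcal{X}\|_F$, where $X_j$ is the $j$th unfolding of $\mathcal{X}$. Set $r_0=r_d=1$ and define TT cores $\mathcal{G}_1=\operatorname{reshape}(U_1,1,n_1,r_1)$, $\mathcal{G}_d=\operatorname{reshape}(V_{d-1}^*,r_{d-1},n_d,1)$, and for $1\le k\le d-2$ \[\mathcal{G}_{k+1}=\operatorname{reshape}\Big(U_k^*\,\operatorname{reshape}\big(U_{k+1},\textstyle\prod_{i=1}^k n_i,\ n_{k+1}r_{k+1}\big),\ r_k,\ n_{k+1},\ r_{k+1}\Big).\] Then the tensor $\tilde{\mathcal{X}}$ with TT cores $\mathcal{G}_1,\dots,\mathcal{G}_d$ satisfies $\|\mathcal{X}-\tilde{\mathcal{X}}\|_F\le\epsilon\|\mathcal{X}\|_F$.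
   Context: $\operatorname{reshape}$ follows MATLAB semantics (column-major ordering preserved). The $j$th unfolding of $\mathcal{X}\in\mathbb{C}^{n_1\times\cdots\times n_d}$ is $X_j=\operatorname{reshape}(\mathcal{X},\prod_{s=1}^j n_s,\prod_{s=j+1}^d n_s)$. A tensor $\mathcal{Y}$ has TT cores $\mathcal{G}_k\in\mathbb{C}^{s_{k-1}\times n_k\times s_k}$ ($s_0=s_d=1$) if $\mathcal{Y}_{i_1,\dots,i_d}=\mathcal{G}_1(:,i_1,:)\mathcal{G}_2(:,i_2,:)\cdots\mathcal{G}_d(:,i_d,:)$ (a product of matrices) for all indices. $\|\cdot\|_F$ is the Frobenius norm (square root of the sum of squared moduli of all entries). *)

theory Defs
  imports "HOL-Analysis.Analysis" "Jordan_Normal_Form.Schur_Decomposition"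
begin

text \<open>Tensors of size n 1 x ... x n d are functions on multi-indices (lists of length d,
  0-based, entry k-1 ranging over {0..<n k}).  Indices are 0-based throughout.\<close>

definition tidx :: "(nat \<Rightarrow> nat) \<Rightarrow> nat \<Rightarrow> nat list set" where
  "tidx n d = {ix. length ix = d \<and> (\<forall>k<d. ix ! k < n (k + 1))}"

definition pdim :: "(nat \<Rightarrow> nat) \<Rightarrow> nat \<Rightarrow> nat" where
  "pdim n j = (\<Prod>s=1..j. n s)"

definition qdim :: "(nat \<Rightarrow> nat) \<Rightarrow> nat \<Rightarrow> nat \<Rightarrow> nat" where
  "qdim n d j = (\<Prod>s=j+1..d. n s)"

definition mindex :: "(nat \<Rightarrow> nat) \<Rightarrow> nat \<Rightarrow> nat \<Rightarrow> nat list" where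
  "mindex n d l = map (\<lambda>k. (l div pdim n k) mod n (k + 1)) [0..<d]"

definition tfrob :: "(nat \<Rightarrow> nat) \<Rightarrow> nat \<Rightarrow> (nat list \<Rightarrow> complex) \<Rightarrow> real" where
  "tfrob n d X = sqrt (\<Sum>ix\<in>tidx n d. (cmod (X ix))\<^sup>2)"

definition mfrob :: "complex mat \<Rightarrow> real" where
  "mfrob A = sqrt (\<Sum>i<dim_row A. \<Sum>j<dim_col A. (cmod (A $$ (i, j)))\<^sup>2)"

text \<open>j-th unfolding X_j = reshape(X, n1...nj, n(j+1)...nd), column-major.\<close>
definition tunfold :: "(nat \<Rightarrow> nat) \<Rightarrow> nat \<Rightarrow> (nat list \<Rightarrow> complex) \<Rightarrow> nat \<Rightarrow> complex mat" where
  "tunfold n d X j = mat (pdim n j) (qdim n d j)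
     (\<lambda>(a, b). X (mindex n d (a + pdim n j * b)))"

definition vecm :: "complex mat \<Rightarrow> nat \<Rightarrow> complex" where
  "vecm M l = M $$ (l mod dim_row M, l div dim_row M)"

definition reshape_mat :: "complex mat \<Rightarrow> nat \<Rightarrow> nat \<Rightarrow> complex mat" where
  "reshape_mat M p q = mat p q (\<lambda>(i, j). vecm M (i + p * j))"

text \<open>MATLAB reshape of a matrix into an s x m x t three-way tensor (0-based entries a i b).\<close>
definition reshape3 :: "complex mat \<Rightarrow> nat \<Rightarrow> nat \<Rightarrow> nat \<Rightarrow> nat \<Rightarrow> nat \<Rightarrow> nat \<Rightarrow> complex" where
  "reshape3 M s m t a i b = vecm M (a + s * i + s * m * b)"

definition core_slice :: "(nat \<Rightarrow> nat \<Rightarrow> nat \<Rightarrow> complex) \<Rightarrow> nat \<Rightarrow> nat \<Rightarrow> nat \<Rightarrow> complex mat" where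
  "core_slice G s t i = mat s t (\<lambda>(a, b). G a i b)"

text \<open>Tensor with TT cores G 1, ..., G d of sizes s(k-1) x n k x s k:
  entry at multi-index ix equals G1(:,i1,:) * ... * Gd(:,id,:) (a 1x1 matrix when s 0 = s d = 1).\<close>
definition tt_tensor :: "(nat \<Rightarrow> nat \<Rightarrow> nat \<Rightarrow> nat \<Rightarrow> complex) \<Rightarrow> (nat \<Rightarrow> nat) \<Rightarrow> nat
    \<Rightarrow> nat list \<Rightarrow> complex" where
  "tt_tensor G s d ix =
     (foldl (\<lambda>P k. P * core_slice (G k) (s (k - 1)) (s k) (ix ! (k - 1))) (1\<^sub>m (s 0)) [1..<d+1]) $$ (0, 0)"

definition tt_cores :: "(nat \<Rightarrow> nat) \<Rightarrow> nat \<Rightarrow> (nat \<Rightarrow> nat) \<Rightarrow> (nat \<Rightarrow> complex mat) \<Rightarrow> (nat \<Rightarrow> complex mat)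
    \<Rightarrow> nat \<Rightarrow> nat \<Rightarrow> nat \<Rightarrow> nat \<Rightarrow> complex" where
  "tt_cores n d r U V k =
     (if k = 1 then reshape3 (U 1) 1 (n 1) (r 1)
      else if k = d then reshape3 (mat_adjoint (V (d - 1))) (r (d - 1)) (n d) 1
      else reshape3 (mat_adjoint (U (k - 1)) *
                     reshape_mat (U k) (pdim n (k - 1)) (n k * r k))
             (r (k - 1)) (n k) (r k))"

end

theory Submission
  imports Defs
begin

text \<open>
  For 1 \<le> k \<le> d - 1 let Y_k be the tensor whose k-th unfolding is U_k times the unfolding of the
  trailing cores G_(k+1), ..., G_d.  Then Y_1 is the TT tensor, the (d-1)-st unfolding of Y_(d-1)
  is U_(d-1) V_(d-1)^H, and for k < d - 1 the k-th unfolding of Y_k is P_k Z, where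
  P_k = U_k U_k^H is the orthogonal projection onto the range of U_k and Z is the k-th unfolding
  of Y_(k+1).  Splitting X_k - P_k Z = P_k (X_k - Z) + (I - P_k) (X_k - U_k V_k^H) into
  orthogonal parts gives ||X - Y_k||^2 \<le> ||X_k - U_k V_k^H||^2 + ||X - Y_(k+1)||^2, and the
  d - 1 resulting bounds add up to ||X - Y_1||^2 \<le> \<epsilon>^2 ||X||^2.
\<close>

section \<open>Adjoints and the Frobenius norm\<close>

lemma dim_mat_adjoint [simp]:
  "dim_row (mat_adjoint A) = dim_col A" "dim_col (mat_adjoint A) = dim_row A"
  unfolding mat_adjoint_def by (auto simp: mat_of_rows_def)

lemma carrier_mat_adjoint [simp]: "A \<in> carrier_mat m n \<Longrightarrow> mat_adjoint A \<in> carrier_mat n m"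
  unfolding carrier_mat_def by simp

lemma index_mat_adjoint [simp]:
  "i < dim_col A \<Longrightarrow> j < dim_row A \<Longrightarrow> mat_adjoint A $$ (i, j) = cnj (A $$ (j, i))"
  unfolding mat_adjoint_def by (auto simp: mat_of_rows_def)

lemma index_mult_mat_sum:
  assumes "A \<in> carrier_mat m n" "B \<in> carrier_mat n q" "i < m" "j < q"
  shows "(A * B) $$ (i, j) = (\<Sum>k<n. A $$ (i, k) * B $$ (k, j))"
  using assms by (auto simp: scalar_prod_def lessThan_atLeast0 intro!: sum.cong)

lemma mat_adjoint_mult:
  fixes A B :: "complex mat"
  assumes A: "A \<in> carrier_mat m n" and B: "B \<in> carrier_mat n q"
  shows "mat_adjoint (A * B) = mat_adjoint B * mat_adjoint A"
proof (rule eq_matI)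
  fix i j assume "i < dim_row (mat_adjoint B * mat_adjoint A)" "j < dim_col (mat_adjoint B * mat_adjoint A)"
  then have i: "i < q" and j: "j < m" using A B by auto
  have "mat_adjoint (A * B) $$ (i, j) = cnj ((A * B) $$ (j, i))"
    using A B i j by simp
  also have "\<dots> = cnj (\<Sum>k<n. A $$ (j, k) * B $$ (k, i))"
    by (simp only: index_mult_mat_sum[OF A B j i])
  also have "\<dots> = (\<Sum>k<n. mat_adjoint B $$ (i, k) * mat_adjoint A $$ (k, j))"
    using A B i j by (simp add: mult.commute)
  also have "\<dots> = (mat_adjoint B * mat_adjoint A) $$ (i, j)"
    using A B i j by (intro index_mult_mat_sum[of _ q n _ m, symmetric]) auto
  finally show "mat_adjoint (A * B) $$ (i, j) = (mat_adjoint B * mat_adjoint A) $$ (i, j)" .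
qed (use A B in auto)

lemma mat_adjoint_adjoint [simp]: "mat_adjoint (mat_adjoint A) = (A :: complex mat)"
  by (intro eq_matI) auto

lemma mat_adjoint_one [simp]: "mat_adjoint (1\<^sub>m n :: complex mat) = 1\<^sub>m n"
  by (intro eq_matI) auto

lemma mat_adjoint_minus:
  fixes A B :: "complex mat"
  assumes "A \<in> carrier_mat m n" "B \<in> carrier_mat m n"
  shows "mat_adjoint (A - B) = mat_adjoint A - mat_adjoint B"
  using assms by (intro eq_matI) auto

definition frob_sq :: "complex mat \<Rightarrow> real" where
  "frob_sq A = (\<Sum>i<dim_row A. \<Sum>j<dim_col A. (cmod (A $$ (i, j)))\<^sup>2)"

lemma mfrob_eq_sqrt_frob_sq: "mfrob A = sqrt (frob_sq A)"
  unfolding mfrob_def frob_sq_def ..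

lemma frob_sq_nonneg: "frob_sq A \<ge> 0"
  unfolding frob_sq_def by (intro sum_nonneg) auto

lemma cmod_add_power2: "(cmod (a + b))\<^sup>2 = (cmod a)\<^sup>2 + (cmod b)\<^sup>2 + 2 * Re (a * cnj b)"
  unfolding cmod_power2 by (simp add: power2_eq_square algebra_simps)

lemma frob_sq_add_orthogonal:
  assumes A: "A \<in> carrier_mat m n" and B: "B \<in> carrier_mat m n"
    and orth: "mat_adjoint B * A = 0\<^sub>m n n"
  shows "frob_sq (A + B) = frob_sq A + frob_sq B"
proof -
  have "(\<Sum>i<m. A $$ (i, j) * cnj (B $$ (i, j))) = (mat_adjoint B * A) $$ (j, j)" if "j < n" for j
    using A B that by (subst index_mult_mat_sum[of _ n m _ n]) (auto simp: mult.commute)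
  then have "(\<Sum>i<m. A $$ (i, j) * cnj (B $$ (i, j))) = 0" if "j < n" for j
    using orth that by simp
  then have cross: "(\<Sum>i<m. \<Sum>j<n. A $$ (i, j) * cnj (B $$ (i, j))) = 0"
    by (subst sum.swap) simp
  have "frob_sq (A + B) = (\<Sum>i<m. \<Sum>j<n. (cmod (A $$ (i, j)))\<^sup>2 + (cmod (B $$ (i, j)))\<^sup>2
      + 2 * Re (A $$ (i, j) * cnj (B $$ (i, j))))"
    using A B unfolding frob_sq_def by (intro sum.cong refl) (auto simp: cmod_add_power2)
  also have "\<dots> = frob_sq A + frob_sq B + 2 * Re (\<Sum>i<m. \<Sum>j<n. A $$ (i, j) * cnj (B $$ (i, j)))"
    using A B by (simp add: frob_sq_def sum.distrib sum_distrib_left)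
  finally show ?thesis
    by (simp add: cross)
qed

section \<open>Orthogonal projections\<close>

declare minus_carrier_mat [simp]

locale orthonormal_cols =
  fixes U :: "complex mat" and p r :: nat
  assumes carrier_U: "U \<in> carrier_mat p r" and adjoint_mult_U: "mat_adjoint U * U = 1\<^sub>m r"
begin

definition proj :: "complex mat" where
  "proj = U * mat_adjoint U"

lemma carrier_proj [simp]: "proj \<in> carrier_mat p p"
  using carrier_U unfolding proj_def by auto

lemma dim_proj [simp]: "dim_row proj = p" "dim_col proj = p"
  using carrier_proj unfolding carrier_mat_def by auto

lemma carrier_compl_proj [simp]: "1\<^sub>m p - proj \<in> carrier_mat p p"
  by (intro minus_carrier_mat) auto

lemma proj_mult_U: "proj * U = U"
proof -
  have "proj * U = U * (mat_adjoint U * U)"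
    unfolding proj_def using carrier_U by (intro assoc_mult_mat[of _ p r _ p _ r]) auto
  then show ?thesis
    using carrier_U adjoint_mult_U by simp
qed

lemma compl_proj_mult_U: "(1\<^sub>m p - proj) * U = 0\<^sub>m p r"
  using carrier_U
  by (auto simp: minus_mult_distrib_mat[OF one_carrier_mat carrier_proj carrier_U] proj_mult_U)

lemma compl_proj_mult_proj: "(1\<^sub>m p - proj) * proj = 0\<^sub>m p p"
proof -
  have "(1\<^sub>m p - proj) * proj = ((1\<^sub>m p - proj) * U) * mat_adjoint U"
    unfolding proj_def using carrier_U by (intro assoc_mult_mat[of _ p p _ r _ p, symmetric]) auto
  then show ?thesis
    using carrier_U by (simp add: compl_proj_mult_U)
qed

lemma adjoint_compl_proj: "mat_adjoint (1\<^sub>m p - proj) = 1\<^sub>m p - proj"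
proof -
  have "mat_adjoint proj = proj"
    unfolding proj_def using carrier_U by (simp add: mat_adjoint_mult[of _ p r _ p])
  then show ?thesis
    by (simp add: mat_adjoint_minus[of _ p p])
qed

lemma frob_sq_proj_add_compl:
  assumes Z: "Z \<in> carrier_mat p q" and W: "W \<in> carrier_mat p q"
  shows "frob_sq (proj * Z + (1\<^sub>m p - proj) * W) = frob_sq (proj * Z) + frob_sq ((1\<^sub>m p - proj) * W)"
proof (rule frob_sq_add_orthogonal)
  have "mat_adjoint ((1\<^sub>m p - proj) * W) * (proj * Z) = (mat_adjoint W * (1\<^sub>m p - proj)) * (proj * Z)"
    using W by (simp add: mat_adjoint_mult[of _ p p _ q] adjoint_compl_proj)
  also have "\<dots> = mat_adjoint W * ((1\<^sub>m p - proj) * (proj * Z))"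
    using Z W by (intro assoc_mult_mat[of _ q p _ p _ q]) auto
  also have "(1\<^sub>m p - proj) * (proj * Z) = ((1\<^sub>m p - proj) * proj) * Z"
    using Z by (intro assoc_mult_mat[of _ p p _ p _ q, symmetric]) auto
  also have "((1\<^sub>m p - proj) * proj) * Z = 0\<^sub>m p q"
    using Z by (simp add: compl_proj_mult_proj)
  also have "mat_adjoint W * 0\<^sub>m p q = 0\<^sub>m q q"
    using W by (intro right_mult_zero_mat) simp
  finally show "mat_adjoint ((1\<^sub>m p - proj) * W) * (proj * Z) = 0\<^sub>m q q" .
qed (use Z W in auto)

lemma proj_add_compl:
  assumes Z: "Z \<in> carrier_mat p q"
  shows "proj * Z + (1\<^sub>m p - proj) * Z = Z"
proof -
  have "(1\<^sub>m p - proj) * Z = Z - proj * Z"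
    using Z by (simp add: minus_mult_distrib_mat[OF one_carrier_mat carrier_proj])
  then show ?thesis
    using Z by (intro eq_matI) auto
qed

lemma frob_sq_proj_le: "Z \<in> carrier_mat p q \<Longrightarrow> frob_sq (proj * Z) \<le> frob_sq Z"
  using frob_sq_proj_add_compl[of Z q Z] proj_add_compl[of Z q] frob_sq_nonneg[of "(1\<^sub>m p - proj) * Z"]
  by simp

lemma frob_sq_compl_proj_le: "Z \<in> carrier_mat p q \<Longrightarrow> frob_sq ((1\<^sub>m p - proj) * Z) \<le> frob_sq Z"
  using frob_sq_proj_add_compl[of Z q Z] proj_add_compl[of Z q] frob_sq_nonneg[of "proj * Z"]
  by simp

lemma frob_sq_minus_proj_le:
  assumes M: "M \<in> carrier_mat p q" and Z: "Z \<in> carrier_mat p q" and V: "V \<in> carrier_mat q r"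
  shows "frob_sq (M - proj * Z) \<le> frob_sq (M - U * mat_adjoint V) + frob_sq (M - Z)"
proof -
  have UV: "U * mat_adjoint V \<in> carrier_mat p q"
    using carrier_U V by simp
  have "(1\<^sub>m p - proj) * (U * mat_adjoint V) = ((1\<^sub>m p - proj) * U) * mat_adjoint V"
    using carrier_U V by (intro assoc_mult_mat[of _ p p _ r _ q, symmetric]) auto
  then have "(1\<^sub>m p - proj) * (M - U * mat_adjoint V) = (1\<^sub>m p - proj) * M"
    using M UV V by (simp add: mult_minus_distrib_mat[OF carrier_compl_proj] compl_proj_mult_U)
      (intro eq_matI; auto)
  then have "M - proj * Z = proj * (M - Z) + (1\<^sub>m p - proj) * (M - U * mat_adjoint V)"
    using M Z
    by (simp add: mult_minus_distrib_mat[OF carrier_proj] minus_mult_distrib_mat[OF one_carrier_mat carrier_proj])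
      (intro eq_matI; auto)
  then have "frob_sq (M - proj * Z) = frob_sq (proj * (M - Z)) + frob_sq ((1\<^sub>m p - proj) * (M - U * mat_adjoint V))"
    using frob_sq_proj_add_compl[of "M - Z" q "M - U * mat_adjoint V"] M Z UV by simp
  also have "\<dots> \<le> frob_sq (M - Z) + frob_sq (M - U * mat_adjoint V)"
    using frob_sq_proj_le[of "M - Z" q] frob_sq_compl_proj_le[of "M - U * mat_adjoint V" q] M Z UV
    by simp
  finally show ?thesis
    by simp
qed

end

section \<open>Column-major indexing\<close>

lemma pdim_0 [simp]: "pdim n 0 = 1"
  unfolding pdim_def by simp

lemma pdim_Suc: "pdim n (Suc k) = pdim n k * n (Suc k)"
  unfolding pdim_def by (simp add: prod.nat_ivl_Suc')

lemma pdim_1 [simp]: "pdim n (Suc 0) = n (Suc 0)"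
  using pdim_Suc[of n 0] by simp

lemma pdim_eq_mult_prod: "k \<le> j \<Longrightarrow> pdim n j = pdim n k * (\<Prod>s=k+1..j. n s)"
proof (induction j rule: dec_induct)
  case (step j)
  then show ?case
    by (simp add: pdim_Suc prod.nat_ivl_Suc' mult.assoc)
qed simp

lemma pdim_eq_mult_qdim: "k \<le> d \<Longrightarrow> pdim n d = pdim n k * qdim n d k"
  unfolding qdim_def by (rule pdim_eq_mult_prod)

lemma qdim_self [simp]: "qdim n d d = 1"
  unfolding qdim_def by simp

lemma qdim_Suc: "k < d \<Longrightarrow> qdim n d k = n (Suc k) * qdim n d (Suc k)"
  unfolding qdim_def by (simp add: prod.atLeast_Suc_atMost)

lemma qdim_pred: "0 < d \<Longrightarrow> qdim n d (d - Suc 0) = n d"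
  using qdim_Suc[of "d - 1" d n] by simp

lemma add_mult_less_mult: "a < p \<Longrightarrow> c < q \<Longrightarrow> a + p * c < p * (q :: nat)"
proof -
  assume "a < p" "c < q"
  then have "a + p * c < p * Suc c" by simp
  also have "\<dots> \<le> p * q" using \<open>c < q\<close> by (intro mult_le_mono2) simp
  finally show ?thesis .
qed

lemma sum_lessThan_mult:
  fixes h :: "nat \<Rightarrow> 'a :: comm_monoid_add" and p q :: nat
  shows "(\<Sum>l<p * q. h l) = (\<Sum>a<p. \<Sum>c<q. h (a + p * c))"
proof -
  have "(\<Sum>l<p * q. h l) = (\<Sum>(a, c)\<in>{..<p} \<times> {..<q}. h (a + p * c))"
  proof (rule sum.reindex_bij_witness[of _ "\<lambda>(a, c). a + p * c" "\<lambda>l. (l mod p, l div p)"])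
    fix l assume "l \<in> {..<p * q}"
    then have "l < q * p" "p > 0"
      by (auto simp: mult.commute intro: gr0I)
    then show "(l mod p, l div p) \<in> {..<p} \<times> {..<q}"
      by (simp add: less_mult_imp_div_less)
  qed (auto simp: add_mult_less_mult)
  then show ?thesis
    by (simp add: sum.cartesian_product)
qed

lemma length_mindex [simp]: "length (mindex n d l) = d"
  unfolding mindex_def by simp

lemma nth_mindex: "j < d \<Longrightarrow> mindex n d l ! j = l div pdim n j mod n (Suc j)"
  unfolding mindex_def by simp

lemma mindex_Suc: "mindex n (Suc d) l = mindex n d l @ [l div pdim n d mod n (Suc d)]"
  unfolding mindex_def by simp

lemma mindex_add_pdim: "mindex n d (a + pdim n d * i) = mindex n d a"
proof (rule nth_equalityI)
  fix j assume "j < length (mindex n d (a + pdim n d * i))"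
  then have j: "j < d" by simp
  have "pdim n d = pdim n (Suc j) * (\<Prod>s=Suc j+1..d. n s)"
    using j by (intro pdim_eq_mult_prod) simp
  then have "pdim n d = pdim n j * (n (Suc j) * (\<Prod>s=Suc j+1..d. n s))"
    by (simp add: pdim_Suc mult.assoc)
  then have "(a + pdim n d * i) div pdim n j mod n (Suc j) = a div pdim n j mod n (Suc j)"
    by (cases "pdim n j = 0") (simp_all add: mult.assoc)
  then show "mindex n d (a + pdim n d * i) ! j = mindex n d a ! j"
    using j by (simp add: nth_mindex)
qed simp

lemma div_pdim_add_low:
  assumes "a < pdim n k" "k \<le> j"
  shows "(a + pdim n k * c) div pdim n j = pdim n k * c div pdim n j"
  using assms by (simp add: pdim_eq_mult_prod[of k j] div_mult2_eq)

lemma nth_mindex_add_low: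
  "a < pdim n k \<Longrightarrow> k \<le> j \<Longrightarrow> j < d \<Longrightarrow> mindex n d (a + pdim n k * c) ! j = mindex n d (pdim n k * c) ! j"
  by (simp add: nth_mindex div_pdim_add_low)

lemma nth_mindex_add_pdim_self:
  "a < pdim n k \<Longrightarrow> k < d \<Longrightarrow> mindex n d (a + pdim n k * c) ! k = c mod n (Suc k)"
  by (simp add: nth_mindex)

lemma mod_pdim_Suc_add:
  assumes "a < pdim n k"
  shows "(a + pdim n k * c) mod pdim n (Suc k) = a + pdim n k * (c mod n (Suc k))"
  using assms by (simp add: pdim_Suc mod_mult2_eq)

lemma tidx_Suc: "tidx n (Suc d) = (\<lambda>(ix, i). ix @ [i]) ` (tidx n d \<times> {..<n (Suc d)})"
proof (intro equalityI subsetI)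
  fix ix assume "ix \<in> tidx n (Suc d)"
  then have ix: "length ix = Suc d" "\<And>k. k < Suc d \<Longrightarrow> ix ! k < n (Suc k)"
    unfolding tidx_def by auto
  then have "ix = butlast ix @ [ix ! d]" "butlast ix \<in> tidx n d" "ix ! d < n (Suc d)"
    unfolding tidx_def by (auto simp: nth_butlast butlast_conv_take take_Suc_conv_app_nth[symmetric])
  then show "ix \<in> (\<lambda>(ix, i). ix @ [i]) ` (tidx n d \<times> {..<n (Suc d)})"
    by (intro image_eqI[of _ _ "(butlast ix, ix ! d)"]) auto
qed (auto simp: tidx_def nth_append less_Suc_eq)

lemma sum_tidx:
  fixes g :: "nat list \<Rightarrow> 'a :: comm_monoid_add"
  shows "(\<Sum>ix\<in>tidx n d. g ix) = (\<Sum>l<pdim n d. g (mindex n d l))"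
proof (induction d arbitrary: g)
  case 0
  have "tidx n 0 = {[]}"
    unfolding tidx_def by auto
  then show ?case
    by (simp add: mindex_def)
next
  case (Suc d)
  have "inj_on (\<lambda>(ix, i). ix @ [i]) (tidx n d \<times> {..<n (Suc d)})"
    by (auto simp: inj_on_def)
  then have "(\<Sum>ix\<in>tidx n (Suc d). g ix) = (\<Sum>ix\<in>tidx n d. \<Sum>i<n (Suc d). g (ix @ [i]))"
    unfolding tidx_Suc by (subst sum.reindex) (simp_all add: sum.cartesian_product case_prod_beta)
  also have "\<dots> = (\<Sum>a<pdim n d. \<Sum>i<n (Suc d). g (mindex n d a @ [i]))"
    by (rule Suc.IH)
  also have "\<dots> = (\<Sum>a<pdim n d. \<Sum>i<n (Suc d). g (mindex n (Suc d) (a + pdim n d * i)))"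
    by (intro sum.cong refl) (simp add: mindex_Suc mindex_add_pdim)
  also have "\<dots> = (\<Sum>l<pdim n (Suc d). g (mindex n (Suc d) l))"
    unfolding pdim_Suc by (rule sum_lessThan_mult[symmetric])
  finally show ?case .
qed

definition unfold_vec :: "(nat \<Rightarrow> nat) \<Rightarrow> nat \<Rightarrow> nat \<Rightarrow> (nat \<Rightarrow> complex) \<Rightarrow> complex mat" where
  "unfold_vec n d k v = mat (pdim n k) (qdim n d k) (\<lambda>(a, c). v (a + pdim n k * c))"

lemma dim_unfold_vec [simp]:
  "dim_row (unfold_vec n d k v) = pdim n k" "dim_col (unfold_vec n d k v) = qdim n d k"
  unfolding unfold_vec_def by simp_all

lemma index_unfold_vec [simp]:
  "a < pdim n k \<Longrightarrow> c < qdim n d k \<Longrightarrow> unfold_vec n d k v $$ (a, c) = v (a + pdim n k * c)"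
  unfolding unfold_vec_def by simp

lemma tunfold_eq_unfold_vec: "tunfold n d X k = unfold_vec n d k (\<lambda>l. X (mindex n d l))"
  unfolding tunfold_def unfold_vec_def ..

lemma unfold_vec_minus: "unfold_vec n d k (\<lambda>l. v l - w l) = unfold_vec n d k v - unfold_vec n d k w"
  by (intro eq_matI) auto

lemma frob_sq_unfold_vec: "k \<le> d \<Longrightarrow> frob_sq (unfold_vec n d k v) = (\<Sum>l<pdim n d. (cmod (v l))\<^sup>2)"
  by (simp add: frob_sq_def pdim_eq_mult_qdim[of k d] sum_lessThan_mult)

lemma tfrob_eq_sqrt_sum: "tfrob n d T = sqrt (\<Sum>l<pdim n d. (cmod (T (mindex n d l)))\<^sup>2)"
  unfolding tfrob_def by (simp add: sum_tidx)

section \<open>Tensor-train contractions\<close>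

lemma foldl_mult_carrier:
  assumes S: "\<And>k. S k \<in> carrier_mat (s (k - 1)) (s k)"
    and B: "B \<in> carrier_mat b (s m)" and "m \<le> e"
  shows "foldl (\<lambda>P k. P * S k) B [Suc m..<Suc e] \<in> carrier_mat b (s e)"
  using \<open>m \<le> e\<close>
proof (induction e rule: dec_induct)
  case (step e)
  then show ?case
    using S[of "Suc e"] by simp
qed (use B in simp)

lemma foldl_mult_assoc:
  assumes S: "\<And>k. S k \<in> carrier_mat (s (k - 1)) (s k)"
    and A: "A \<in> carrier_mat a b" and B: "B \<in> carrier_mat b (s m)" and "m \<le> e"
  shows "foldl (\<lambda>P k. P * S k) (A * B) [Suc m..<Suc e] = A * foldl (\<lambda>P k. P * S k) B [Suc m..<Suc e]"
  using \<open>m \<le> e\<close>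
proof (induction e rule: dec_induct)
  case (step e)
  have "foldl (\<lambda>P k. P * S k) B [Suc m..<Suc e] \<in> carrier_mat b (s e)"
    by (rule foldl_mult_carrier[OF S B step.hyps(1)])
  then show ?case
    using step.IH step.hyps S[of "Suc e"] A by (simp add: assoc_mult_mat[OF A])
qed simp

lemma vecm_add_mult: "dim_row M = p \<Longrightarrow> a < p \<Longrightarrow> vecm M (a + p * c) = M $$ (a, c)"
  unfolding vecm_def by simp

locale tt_svd =
  fixes n :: "nat \<Rightarrow> nat" and d :: nat and r :: "nat \<Rightarrow> nat" and U V :: "nat \<Rightarrow> complex mat"
  assumes two_le_d: "2 \<le> d" and r_0: "r 0 = 1" and r_d: "r d = 1"
    and carrier_U: "\<And>j. 1 \<le> j \<Longrightarrow> j \<le> d - 1 \<Longrightarrow> U j \<in> carrier_mat (pdim n j) (r j)"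
    and carrier_V: "\<And>j. 1 \<le> j \<Longrightarrow> j \<le> d - 1 \<Longrightarrow> V j \<in> carrier_mat (qdim n d j) (r j)"
begin

lemma tt_cores_first:
  assumes "i < n 1" "b < r 1"
  shows "tt_cores n d r U V 1 0 i b = U 1 $$ (i, b)"
proof -
  have "U 1 \<in> carrier_mat (n 1) (r 1)"
    using carrier_U[of 1] two_le_d by auto
  then show ?thesis
    using assms by (simp add: tt_cores_def reshape3_def vecm_add_mult)
qed

lemma carrier_V_last: "V (d - 1) \<in> carrier_mat (n d) (r (d - 1))"
proof -
  have "V (d - 1) \<in> carrier_mat (qdim n d (d - 1)) (r (d - 1))"
    using two_le_d by (intro carrier_V) auto
  moreover have "qdim n d (d - 1) = n d"
    using two_le_d qdim_pred[of d n] by simp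
  ultimately show ?thesis
    by simp
qed

lemma tt_cores_last:
  assumes "b < r (d - 1)" "i < n d"
  shows "tt_cores n d r U V d b i 0 = cnj (V (d - 1) $$ (i, b))"
  using assms two_le_d carrier_V_last by (simp add: tt_cores_def reshape3_def vecm_add_mult)

lemma tt_cores_middle:
  assumes k: "1 \<le> k" "Suc k \<le> d - 1" and b: "b < r k" and i: "i < n (Suc k)" and b': "b' < r (Suc k)"
  shows "tt_cores n d r U V (Suc k) b i b'
    = (\<Sum>q<pdim n k. cnj (U k $$ (q, b)) * U (Suc k) $$ (q + pdim n k * i, b'))"
proof -
  define p m where "p = pdim n k" and "m = n (Suc k)"
  define W where "W = reshape_mat (U (Suc k)) p (m * r (Suc k))"
  have Uk: "U k \<in> carrier_mat p (r k)"
    using carrier_U k unfolding p_def by simp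
  have Uk1: "U (Suc k) \<in> carrier_mat (p * m) (r (Suc k))"
    using carrier_U[of "Suc k"] k unfolding p_def m_def by (simp add: pdim_Suc)
  have W: "W \<in> carrier_mat p (m * r (Suc k))"
    unfolding W_def reshape_mat_def by simp
  have ib': "i + m * b' < m * r (Suc k)"
    using add_mult_less_mult[OF i b'] unfolding m_def .
  have W_entry: "W $$ (q, i + m * b') = U (Suc k) $$ (q + p * i, b')" if "q < p" for q
  proof -
    have "W $$ (q, i + m * b') = vecm (U (Suc k)) ((q + p * i) + (p * m) * b')"
      unfolding W_def reshape_mat_def using that ib' by (simp add: algebra_simps)
    also have "\<dots> = U (Suc k) $$ (q + p * i, b')"
      using Uk1 add_mult_less_mult[OF that i] unfolding m_def by (intro vecm_add_mult) auto
    finally show ?thesis .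
  qed
  have "tt_cores n d r U V (Suc k) b i b' = vecm (mat_adjoint (U k) * W) (b + r k * (i + m * b'))"
    using k unfolding tt_cores_def reshape3_def W_def p_def m_def by (auto simp: algebra_simps)
  also have "\<dots> = (mat_adjoint (U k) * W) $$ (b, i + m * b')"
    using Uk W b by (intro vecm_add_mult) auto
  also have "\<dots> = (\<Sum>q<p. mat_adjoint (U k) $$ (b, q) * W $$ (q, i + m * b'))"
    using Uk W b ib' by (intro index_mult_mat_sum) auto
  also have "\<dots> = (\<Sum>q<p. cnj (U k $$ (q, b)) * U (Suc k) $$ (q + p * i, b'))"
    using Uk b by (intro sum.cong refl) (simp add: W_entry)
  finally show ?thesis
    unfolding p_def .
qed

definition slice :: "nat \<Rightarrow> nat list \<Rightarrow> complex mat" where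
  "slice k ix = core_slice (tt_cores n d r U V k) (r (k - 1)) (r k) (ix ! (k - 1))"

definition tail :: "nat \<Rightarrow> nat list \<Rightarrow> complex mat" where
  "tail j ix = foldl (\<lambda>P k. P * slice k ix) (1\<^sub>m (r j)) [Suc j..<Suc d]"

lemma carrier_slice [simp]: "slice k ix \<in> carrier_mat (r (k - 1)) (r k)"
  unfolding slice_def core_slice_def by simp

lemma dim_slice [simp]: "dim_row (slice k ix) = r (k - 1)" "dim_col (slice k ix) = r k"
  unfolding slice_def core_slice_def by simp_all

lemma index_slice [simp]:
  "a < r (k - 1) \<Longrightarrow> b < r k \<Longrightarrow> slice k ix $$ (a, b) = tt_cores n d r U V k a (ix ! (k - 1)) b"
  unfolding slice_def core_slice_def by simp

lemma carrier_tail: "j \<le> d \<Longrightarrow> tail j ix \<in> carrier_mat (r j) 1"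
  unfolding tail_def r_d[symmetric]
  by (rule foldl_mult_carrier[of "\<lambda>k. slice k ix" r, OF carrier_slice]) auto

lemma tail_self: "tail d ix = 1\<^sub>m 1"
  unfolding tail_def by (simp add: r_d)

lemma tail_Suc:
  assumes "j < d"
  shows "tail j ix = slice (Suc j) ix * tail (Suc j) ix"
proof -
  have "tail j ix = foldl (\<lambda>P k. P * slice k ix) (slice (Suc j) ix * 1\<^sub>m (r (Suc j))) [Suc (Suc j)..<Suc d]"
    using assms unfolding tail_def by (simp add: upt_conv_Cons del: upt_Suc)
  also have "\<dots> = slice (Suc j) ix * tail (Suc j) ix"
    unfolding tail_def using assms
    by (intro foldl_mult_assoc[of "\<lambda>k. slice k ix" r _ "r j"]) auto
  finally show ?thesis .
qed

lemma tail_cong: "(\<And>p. j \<le> p \<Longrightarrow> p < d \<Longrightarrow> ix ! p = ix' ! p) \<Longrightarrow> tail j ix = tail j ix'"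
  unfolding tail_def slice_def by (rule foldl_cong) (auto simp: Suc_le_eq)

lemma tail_mindex_add_low:
  "a < pdim n k \<Longrightarrow> k \<le> j \<Longrightarrow> tail j (mindex n d (a + pdim n k * c)) = tail j (mindex n d (pdim n k * c))"
  by (intro tail_cong nth_mindex_add_low) auto

lemma tt_tensor_eq_tail: "tt_tensor (tt_cores n d r U V) r d ix = tail 0 ix $$ (0, 0)"
  unfolding tt_tensor_def tail_def slice_def by simp

(* The tensor Y_k of the proof idea, vectorized column-major. *)
definition tt_partial :: "nat \<Rightarrow> nat \<Rightarrow> complex" where
  "tt_partial k l = (\<Sum>b<r k. U k $$ (l mod pdim n k, b) * tail k (mindex n d l) $$ (b, 0))"

definition tail_mat :: "nat \<Rightarrow> complex mat" where
  "tail_mat k = mat (r k) (qdim n d k) (\<lambda>(b, c). tail k (mindex n d (pdim n k * c)) $$ (b, 0))"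

lemma carrier_tail_mat [simp]: "tail_mat k \<in> carrier_mat (r k) (qdim n d k)"
  unfolding tail_mat_def by simp

lemma dim_tail_mat [simp]: "dim_row (tail_mat k) = r k" "dim_col (tail_mat k) = qdim n d k"
  unfolding tail_mat_def by simp_all

lemma tt_tensor_eq_partial_1:
  assumes l: "l < pdim n d"
  shows "tt_tensor (tt_cores n d r U V) r d (mindex n d l) = tt_partial 1 l"
proof -
  define ix where "ix = mindex n d l"
  have i: "l mod n 1 < n 1"
    using l pdim_eq_mult_qdim[of 1 d n] two_le_d by (cases "n 1 = 0") auto
  have ix0: "ix ! 0 = l mod n 1"
    unfolding ix_def using two_le_d by (simp add: nth_mindex)
  have "tt_tensor (tt_cores n d r U V) r d ix = (slice 1 ix * tail 1 ix) $$ (0, 0)"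
    using tail_Suc[of 0 ix] two_le_d by (simp add: tt_tensor_eq_tail)
  also have "\<dots> = (\<Sum>b<r 1. slice 1 ix $$ (0, b) * tail 1 ix $$ (b, 0))"
    using carrier_tail[of 1 ix] two_le_d r_0 by (intro index_mult_mat_sum[of _ 1]) auto
  also have "\<dots> = (\<Sum>b<r 1. U 1 $$ (l mod n 1, b) * tail 1 ix $$ (b, 0))"
    using i ix0 r_0 tt_cores_first by (intro sum.cong refl) simp
  finally show ?thesis
    unfolding tt_partial_def ix_def by simp
qed

lemma unfold_vec_partial:
  assumes k: "1 \<le> k" "k \<le> d - 1"
  shows "unfold_vec n d k (tt_partial k) = U k * tail_mat k"
proof (rule eq_matI)
  have Uk: "U k \<in> carrier_mat (pdim n k) (r k)"
    using carrier_U k by simp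
  fix a c assume "a < dim_row (U k * tail_mat k)" "c < dim_col (U k * tail_mat k)"
  then have a: "a < pdim n k" and c: "c < qdim n d k"
    using Uk by auto
  have "unfold_vec n d k (tt_partial k) $$ (a, c)
      = (\<Sum>b<r k. U k $$ (a, b) * tail k (mindex n d (pdim n k * c)) $$ (b, 0))"
    using a c by (simp add: tt_partial_def tail_mindex_add_low)
  also have "\<dots> = (U k * tail_mat k) $$ (a, c)"
    using Uk a c by (subst index_mult_mat_sum[OF Uk carrier_tail_mat]) (auto simp: tail_mat_def)
  finally show "unfold_vec n d k (tt_partial k) $$ (a, c) = (U k * tail_mat k) $$ (a, c)" .
qed (use carrier_U[OF k] in auto)

(* For pdim n (d - 1) = 0 the linear index pdim n (d - 1) * c no longer determines c. *)
lemma tail_mat_last: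
  assumes "0 < pdim n (d - 1)"
  shows "tail_mat (d - 1) = mat_adjoint (V (d - 1))"
proof (rule eq_matI)
  fix b c assume "b < dim_row (mat_adjoint (V (d - 1)))" "c < dim_col (mat_adjoint (V (d - 1)))"
  then have b: "b < r (d - 1)" and c: "c < n d"
    using carrier_V_last by auto
  define ix where "ix = mindex n d (pdim n (d - 1) * c)"
  have "ix ! (d - 1) = c"
    using nth_mindex_add_pdim_self[of 0 n "d - 1" d c] assms two_le_d c unfolding ix_def by simp
  moreover have "tail (d - 1) ix = slice d ix"
    using tail_Suc[of "d - 1" ix] two_le_d by (simp add: tail_self r_d)
  ultimately have "tail (d - 1) ix $$ (b, 0) = cnj (V (d - 1) $$ (c, b))"
    using b c r_d by (simp add: tt_cores_last)
  then show "tail_mat (d - 1) $$ (b, c) = mat_adjoint (V (d - 1)) $$ (b, c)"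
    using b c carrier_V_last two_le_d by (simp add: tail_mat_def ix_def qdim_pred)
qed (use carrier_V_last two_le_d in \<open>auto simp: qdim_pred\<close>)

lemma unfold_vec_partial_last:
  "unfold_vec n d (d - 1) (tt_partial (d - 1)) = U (d - 1) * mat_adjoint (V (d - 1))"
proof (cases "pdim n (d - 1) = 0")
  case True
  have "U (d - 1) \<in> carrier_mat (pdim n (d - 1)) (r (d - 1))"
    using two_le_d by (intro carrier_U) auto
  then show ?thesis
    using True carrier_V_last two_le_d by (intro eq_matI) (auto simp: qdim_pred)
next
  case False
  then show ?thesis
    using two_le_d unfold_vec_partial[of "d - 1"] tail_mat_last by simp
qed

lemma tt_partial_Suc_add_low:
  assumes "q < pdim n k"
  shows "tt_partial (Suc k) (q + pdim n k * c) = (\<Sum>b'<r (Suc k).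
    U (Suc k) $$ (q + pdim n k * (c mod n (Suc k)), b') * tail (Suc k) (mindex n d (pdim n k * c)) $$ (b', 0))"
  using assms by (simp add: tt_partial_def mod_pdim_Suc_add tail_mindex_add_low)

lemma tail_mat_Suc:
  assumes k: "1 \<le> k" "Suc k \<le> d - 1"
  shows "tail_mat k = mat_adjoint (U k) * unfold_vec n d k (tt_partial (Suc k))"
proof (rule eq_matI)
  define p where "p = pdim n k"
  have Uk: "U k \<in> carrier_mat p (r k)"
    using carrier_U k unfolding p_def by simp
  fix b c assume "b < dim_row (mat_adjoint (U k) * unfold_vec n d k (tt_partial (Suc k)))"
    "c < dim_col (mat_adjoint (U k) * unfold_vec n d k (tt_partial (Suc k)))"
  then have b: "b < r k" and c: "c < qdim n d k"
    using Uk by auto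
  define i ix where "i = c mod n (Suc k)" and "ix = mindex n d (p * c)"
  define T where "T b' = tail (Suc k) ix $$ (b', 0)" for b'
  have "0 < n (Suc k)"
    using c qdim_Suc[of k d n] k by (cases "n (Suc k) = 0") auto
  then have ixk_less: "ix ! k < n (Suc k)"
    using k unfolding ix_def by (simp add: nth_mindex)
  have ixk: "ix ! k = i" if "0 < p"
    using nth_mindex_add_pdim_self[of 0 n k d c] k that unfolding ix_def i_def p_def by simp
  have "tail_mat k $$ (b, c) = (slice (Suc k) ix * tail (Suc k) ix) $$ (b, 0)"
    using b c tail_Suc[of k ix] k by (simp add: tail_mat_def ix_def p_def)
  also have "\<dots> = (\<Sum>b'<r (Suc k). slice (Suc k) ix $$ (b, b') * T b')"
    unfolding T_def using b carrier_tail[of "Suc k" ix] k by (intro index_mult_mat_sum[of _ "r k" _ _ 1]) auto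
  also have "\<dots> = (\<Sum>b'<r (Suc k). \<Sum>q<p. cnj (U k $$ (q, b)) * U (Suc k) $$ (q + p * i, b') * T b')"
  proof (intro sum.cong refl)
    fix b' assume "b' \<in> {..<r (Suc k)}"
    then have "slice (Suc k) ix $$ (b, b') = (\<Sum>q<p. cnj (U k $$ (q, b)) * U (Suc k) $$ (q + p * ix ! k, b'))"
      using b ixk_less k tt_cores_middle unfolding p_def by simp
    also have "\<dots> = (\<Sum>q<p. cnj (U k $$ (q, b)) * U (Suc k) $$ (q + p * i, b'))"
      using ixk by (intro sum.cong refl) auto
    finally show "slice (Suc k) ix $$ (b, b') * T b'
        = (\<Sum>q<p. cnj (U k $$ (q, b)) * U (Suc k) $$ (q + p * i, b') * T b')"
      by (simp add: sum_distrib_right)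
  qed
  also have "\<dots> = (\<Sum>q<p. cnj (U k $$ (q, b)) * tt_partial (Suc k) (q + p * c))"
    by (simp add: tt_partial_Suc_add_low T_def ix_def i_def p_def sum_distrib_left mult.assoc)
      (rule sum.swap)
  also have "\<dots> = (mat_adjoint (U k) * unfold_vec n d k (tt_partial (Suc k))) $$ (b, c)"
    using Uk b c unfolding p_def by (subst index_mult_mat_sum[of _ "r k" "pdim n k" _ "qdim n d k"]) auto
  finally show "tail_mat k $$ (b, c) = (mat_adjoint (U k) * unfold_vec n d k (tt_partial (Suc k))) $$ (b, c)" .
qed (use carrier_U[of k] k in auto)

definition tt_err :: "(nat list \<Rightarrow> complex) \<Rightarrow> nat \<Rightarrow> real" where
  "tt_err X k = (\<Sum>l<pdim n d. (cmod (X (mindex n d l) - tt_partial k l))\<^sup>2)"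

lemma tt_err_eq_frob_sq:
  "j \<le> d \<Longrightarrow> tt_err X k = frob_sq (tunfold n d X j - unfold_vec n d j (tt_partial k))"
  by (simp add: tt_err_def tunfold_eq_unfold_vec unfold_vec_minus[symmetric] frob_sq_unfold_vec)

lemma tt_err_last: "tt_err X (d - 1) = frob_sq (tunfold n d X (d - 1) - U (d - 1) * mat_adjoint (V (d - 1)))"
  using tt_err_eq_frob_sq[of "d - 1"] unfold_vec_partial_last by simp

lemma tt_err_le_Suc:
  assumes k: "1 \<le> k" "Suc k \<le> d - 1" and orth: "mat_adjoint (U k) * U k = 1\<^sub>m (r k)"
  shows "tt_err X k \<le> frob_sq (tunfold n d X k - U k * mat_adjoint (V k)) + tt_err X (Suc k)"
proof -
  have Uk: "U k \<in> carrier_mat (pdim n k) (r k)"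
    using carrier_U k by simp
  interpret orthonormal_cols "U k" "pdim n k" "r k"
    using Uk orth by unfold_locales
  have "unfold_vec n d k (tt_partial k) = U k * (mat_adjoint (U k) * unfold_vec n d k (tt_partial (Suc k)))"
    using k by (simp add: unfold_vec_partial tail_mat_Suc)
  also have "\<dots> = proj * unfold_vec n d k (tt_partial (Suc k))"
    unfolding proj_def using Uk by (intro assoc_mult_mat[symmetric]) auto
  finally have "tt_err X k = frob_sq (tunfold n d X k - proj * unfold_vec n d k (tt_partial (Suc k)))"
    using k tt_err_eq_frob_sq[of k X k] by simp
  also have "\<dots> \<le> frob_sq (tunfold n d X k - U k * mat_adjoint (V k))
      + frob_sq (tunfold n d X k - unfold_vec n d k (tt_partial (Suc k)))"
    using carrier_V k by (intro frob_sq_minus_proj_le) (auto simp: tunfold_eq_unfold_vec)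
  also have "frob_sq (tunfold n d X k - unfold_vec n d k (tt_partial (Suc k))) = tt_err X (Suc k)"
    using k tt_err_eq_frob_sq[of k X "Suc k"] by simp
  finally show ?thesis .
qed

lemma tfrob_tt_residual:
  "tfrob n d (\<lambda>ix. X ix - tt_tensor (tt_cores n d r U V) r d ix) = sqrt (tt_err X 1)"
  unfolding tfrob_eq_sqrt_sum tt_err_def
  by (intro arg_cong[where f = sqrt] sum.cong refl) (simp add: tt_tensor_eq_partial_1)

end

lemma backward_recurrence_le:
  fixes f :: "nat \<Rightarrow> real"
  assumes "a \<le> m" and last: "f m \<le> c" and step_le: "\<And>k. a \<le> k \<Longrightarrow> k < m \<Longrightarrow> f k \<le> c + f (Suc k)"
  shows "f a \<le> real (Suc (m - a)) * c"
  using \<open>a \<le> m\<close>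
proof (induction a rule: inc_induct)
  case (step k)
  have "f k \<le> c + real (Suc (m - Suc k)) * c"
    using step.IH step_le[OF step.hyps(1,2)] by simp
  then show ?case
    using step.hyps by (simp add: Suc_diff_Suc algebra_simps)
qed (use last in simp)

theorem theorem3p2:
  fixes d :: nat and n r :: "nat \<Rightarrow> nat" and X :: "nat list \<Rightarrow> complex"
    and \<epsilon> :: real and U V :: "nat \<Rightarrow> complex mat"
  assumes "d \<ge> 2"
    and "0 < \<epsilon>" and "\<epsilon> < 1"
    and "r 0 = 1" and "r d = 1"
    and "\<And>j. 1 \<le> j \<Longrightarrow> j \<le> d - 1 \<Longrightarrow> U j \<in> carrier_mat (pdim n j) (r j)"
    and "\<And>j. 1 \<le> j \<Longrightarrow> j \<le> d - 1 \<Longrightarrow> mat_adjoint (U j) * U j = 1\<^sub>m (r j)"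
    and "\<And>j. 1 \<le> j \<Longrightarrow> j \<le> d - 1 \<Longrightarrow> V j \<in> carrier_mat (qdim n d j) (r j)"
    and "\<And>j. 1 \<le> j \<Longrightarrow> j \<le> d - 1 \<Longrightarrow>
           mfrob (tunfold n d X j - U j * mat_adjoint (V j)) \<le> \<epsilon> / sqrt (real (d - 1)) * tfrob n d X"
  shows "tfrob n d (\<lambda>ix. X ix - tt_tensor (tt_cores n d r U V) r d ix) \<le> \<epsilon> * tfrob n d X"
proof -
  interpret tt_svd n d r U V
    using assms(1,4,5,6,8) by unfold_locales auto
  define \<delta> where "\<delta> = \<epsilon> / sqrt (real (d - 1)) * tfrob n d X"
  have unfolding_err: "frob_sq (tunfold n d X k - U k * mat_adjoint (V k)) \<le> \<delta>\<^sup>2"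
    if "1 \<le> k" "k \<le> d - 1" for k
    using assms(9)[OF that] unfolding mfrob_eq_sqrt_frob_sq \<delta>_def by (rule sqrt_le_D)
  have "tt_err X 1 \<le> real (Suc (d - 1 - 1)) * \<delta>\<^sup>2"
  proof (rule backward_recurrence_le)
    show "tt_err X (d - 1) \<le> \<delta>\<^sup>2"
      using unfolding_err[of "d - 1"] tt_err_last[of X] assms(1) by simp
    show "tt_err X k \<le> \<delta>\<^sup>2 + tt_err X (Suc k)" if "1 \<le> k" "k < d - 1" for k
      using tt_err_le_Suc[of k X] unfolding_err[of k] assms(7)[of k] that by force
  qed (use assms(1) in simp)
  also have "real (Suc (d - 1 - 1)) * \<delta>\<^sup>2 = (\<epsilon> * tfrob n d X)\<^sup>2"
    using assms(1) by (simp add: \<delta>_def power_mult_distrib power_divide)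
  finally have "tt_err X 1 \<le> (\<epsilon> * tfrob n d X)\<^sup>2" .
  moreover have "0 \<le> \<epsilon> * tfrob n d X"
    using assms(2) unfolding tfrob_def by (simp add: sum_nonneg)
  ultimately show ?thesis
    by (simp add: tfrob_tt_residual real_le_lsqrt)
qed

end
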